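(* Let $E$ be a linear subspace of $\mathbb{R}^d$, $\|\cdot\|_c$ and $\|\cdot\|_s$ norms on $\mathbb{R}^d$ such that $x\mapsto\frac12\|x\|_s^2$ is $L$-smooth with respect to $\|\cdot\|_s$, $p_{c,E}(x)=\min_{y\in E}\|x-y\|_c$, $p_{s,E}(x)=\min_{y\in E}\|x-y\|_s$, $\theta>0$, and $$M_E(x)=\min_{y\in\mathbb{R}^d}\left\{\tfrac12p_{c,E}^2(y)+\tfrac1{2\theta}\|x-y\|_s^2\right\}.$$ Then: (1) $M_E$ is convex and $M_E(y)\le M_E(x)+\langle\nabla M_E(x),y-x\rangle+\frac{L}{2\theta}p_{s,E}^2(y-x)$ for all $x,y\in\mathbb{R}^d$. (2) If $\ell_{cs},u_{cs}>0$ satisfy $\ell_{cs}\|\cdot\|_s\le\|\cdot\|_c\le u_{cs}\|\cdot\|_s$, and $\ell_{cm}=\sqrt{1+\theta\ell_{cs}^2}$, $u_{cm}=\sqrt{1+\theta u_{cs}^2}$, then $\ell_{cm}^2M_E(x)\le\frac12p_{c,E}^2(x)\le u_{cm}^2M_E(x)$ for all $x\in\mathbb{R}^d$. (3) $\|\nabla M_E(x)-\nabla M_E(y)\|_{s,*}\le\frac{L}{\theta}p_{s,E}(x-y)$ for all $x,y\in\mathbb{R}^d$, where $\|\cdot\|_{s,*}$ is the dual norm of $\|\cdot\|_s$.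
   Context: A function $f$ is $L$-smooth with respect to a norm $\|\cdot\|$ if it is differentiable and $\|\nabla f(x)-\nabla f(y)\|_*\le L\|x-y\|$ for all $x,y$, where $\|\cdot\|_*$ is the dual norm. *)

theory Defs
  imports "HOL-Analysis.Analysis"
begin

definition is_norm :: "('a::real_vector \<Rightarrow> real) \<Rightarrow> bool" where
  "is_norm N \<longleftrightarrow> (\<forall>x. N x = 0 \<longleftrightarrow> x = 0) \<and> (\<forall>c x. N (c *\<^sub>R x) = \<bar>c\<bar> * N x)
     \<and> (\<forall>x y. N (x + y) \<le> N x + N y)"

definition dual_norm :: "('a::real_inner \<Rightarrow> real) \<Rightarrow> 'a \<Rightarrow> real" where
  "dual_norm N g = Sup {g \<bullet> x | x. N x \<le> 1}"

definition has_gradient_everywhere :: "('a::real_inner \<Rightarrow> real) \<Rightarrow> ('a \<Rightarrow> 'a) \<Rightarrow> bool" where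
  "has_gradient_everywhere f G \<longleftrightarrow> (\<forall>x. (f has_derivative (\<lambda>h. G x \<bullet> h)) (at x))"

definition L_smooth :: "('a::real_inner \<Rightarrow> real) \<Rightarrow> real \<Rightarrow> ('a \<Rightarrow> real) \<Rightarrow> bool" where
  "L_smooth N L f \<longleftrightarrow> (\<exists>G. has_gradient_everywhere f G \<and>
      (\<forall>x y. dual_norm N (G x - G y) \<le> L * N (x - y)))"

definition dist_to :: "('a::real_vector \<Rightarrow> real) \<Rightarrow> 'a set \<Rightarrow> 'a \<Rightarrow> real" where
  "dist_to N E x = Inf ((\<lambda>y. N (x - y)) ` E)"

definition moreau_env :: "('a::real_vector \<Rightarrow> real) \<Rightarrow> ('a \<Rightarrow> real) \<Rightarrow> 'a set \<Rightarrow> real \<Rightarrow> 'a \<Rightarrow> real" where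
  "moreau_env Nc Ns E \<theta> x =
     Inf (range (\<lambda>y. (1/2) * (dist_to Nc E y)\<^sup>2 + (1 / (2 * \<theta>)) * (Ns (x - y))\<^sup>2))"

end

theory Submission
  imports Defs
begin

text \<open>
  The infimum defining M_E(x) is attained at a proximal point z(x), and the gradient of M_E at x
  is the gradient of g = |.|_s^2 / (2 theta) at x - z(x). Optimality of z(x) makes this vector a
  subgradient both of p_{c,E}^2 / 2 at z(x) and of g at x - z(x); adding the two inequalities
  gives M_E(x) + <grad M_E(x), y - x> <= M_E(y). Keeping z(x) fixed and applying the descent lemma
  to g gives the matching upper bound with remainder L/(2 theta) |y - x|_s^2. The two bounds
  yield differentiability and convexity. As M_E is invariant under translations by E, its
  gradient is orthogonal to E, so |y - x|_s may be replaced by p_{s,E}(y - x); evaluating both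
  bounds at x - s w and y + s w and optimising over s gives the Lipschitz estimate. For the
  comparison with p_{c,E}^2 / 2, test the infimum at a point of the segment from x to its
  nearest point in E, and conversely use p_{c,E}(x) <= p_{c,E}(z(x)) + u_cs |x - z(x)|_s.
\<close>

section \<open>Norms and dual norms\<close>

context
  fixes N :: "'a::real_vector \<Rightarrow> real"
  assumes N: "is_norm N"
begin

lemma is_norm_eq_0_iff: "N x = 0 \<longleftrightarrow> x = 0"
  using N unfolding is_norm_def by blast

lemma is_norm_zero: "N 0 = 0"
  using is_norm_eq_0_iff by blast

lemma is_norm_scaleR: "N (c *\<^sub>R x) = \<bar>c\<bar> * N x"
  using N unfolding is_norm_def by blast

lemma is_norm_triangle: "N (x + y) \<le> N x + N y"
  using N unfolding is_norm_def by blast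

lemma is_norm_minus: "N (- x) = N x"
  using is_norm_scaleR[of "-1" x] by simp

lemma is_norm_nonneg: "0 \<le> N x"
  using is_norm_triangle[of x "- x"] is_norm_minus[of x] is_norm_zero by simp

lemma is_norm_triangle_diff: "N (x - z) \<le> N (x - y) + N (y - z)"
  using is_norm_triangle[of "x - y" "y - z"] by simp

lemma convex_on_is_norm: "convex_on UNIV N"
proof (rule convex_onI)
  fix t :: real and x y :: 'a
  assume "0 < t" "t < 1"
  then show "N ((1 - t) *\<^sub>R x + t *\<^sub>R y) \<le> (1 - t) * N x + t * N y"
    using is_norm_triangle[of "(1 - t) *\<^sub>R x" "t *\<^sub>R y"] by (simp add: is_norm_scaleR)
qed simp

end

context
  fixes N :: "'a::euclidean_space \<Rightarrow> real"
  assumes N: "is_norm N"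
begin

lemma continuous_on_is_norm: "continuous_on UNIV N"
  by (intro convex_on_continuous convex_on_is_norm N) simp

lemma is_norm_equivalent:
  "\<exists>c C. 0 < c \<and> 0 < C \<and> (\<forall>x. c * norm x \<le> N x \<and> N x \<le> C * norm x)"
proof -
  obtain b :: 'a where "b \<in> Basis" using nonempty_Basis by blast
  then have ne: "sphere (0::'a) 1 \<noteq> {}" by (auto intro!: exI[of _ b])
  have cont: "continuous_on (sphere 0 1) N"
    using continuous_on_is_norm continuous_on_subset by blast
  obtain x0 where x0: "x0 \<in> sphere 0 1" "\<forall>y\<in>sphere 0 1. N x0 \<le> N y"
    using continuous_attains_inf[OF compact_sphere ne cont] by blast
  obtain x1 where x1: "x1 \<in> sphere 0 1" "\<forall>y\<in>sphere 0 1. N y \<le> N x1"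
    using continuous_attains_sup[OF compact_sphere ne cont] by blast
  have pos: "0 < N x" if "x \<in> sphere 0 1" for x
    using that is_norm_nonneg[OF N, of x] is_norm_eq_0_iff[OF N, of x] by force
  have "N x0 * norm x \<le> N x \<and> N x \<le> N x1 * norm x" for x
  proof (cases "x = 0")
    case True
    then show ?thesis by (simp add: is_norm_zero[OF N])
  next
    case False
    define u where "u = (1 / norm x) *\<^sub>R x"
    have "u \<in> sphere 0 1" using False by (simp add: u_def)
    moreover have "N x = N u * norm x"
      using False is_norm_scaleR[OF N, of "norm x" u] by (simp add: u_def)
    ultimately show ?thesis
      using x0(2) x1(2) by (simp add: mult_right_mono)
  qed
  then show ?thesis using pos x0(1) x1(1) by blast
qed

lemma bdd_above_dual_norm_set: "bdd_above {g \<bullet> x | x. N x \<le> 1}"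
proof -
  obtain c where c: "0 < c" "\<And>x. c * norm x \<le> N x"
    using is_norm_equivalent by blast
  have "g \<bullet> x \<le> norm g / c" if "N x \<le> 1" for x
  proof -
    have "c * norm x \<le> 1" using c(2)[of x] that by linarith
    then have "norm x \<le> 1 / c" using c(1) by (simp add: field_simps mult.commute)
    then have "norm g * norm x \<le> norm g / c" by (simp add: mult_left_mono divide_inverse)
    then show ?thesis using norm_cauchy_schwarz[of g x] by linarith
  qed
  then show ?thesis unfolding bdd_above_def by blast
qed

lemma dual_norm_upper: "N x \<le> 1 \<Longrightarrow> g \<bullet> x \<le> dual_norm N g"
  unfolding dual_norm_def by (rule cSup_upper) (use bdd_above_dual_norm_set in auto)

lemma dual_norm_nonneg: "0 \<le> dual_norm N g"
  using dual_norm_upper[of 0 g] by (simp add: is_norm_zero[OF N])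

lemma inner_le_dual_norm: "g \<bullet> x \<le> dual_norm N g * N x"
proof (cases "x = 0")
  case True
  then show ?thesis by (simp add: is_norm_zero[OF N])
next
  case False
  then have pos: "0 < N x"
    using is_norm_eq_0_iff[OF N, of x] is_norm_nonneg[OF N, of x] by linarith
  then have "g \<bullet> ((1 / N x) *\<^sub>R x) \<le> dual_norm N g"
    by (intro dual_norm_upper) (simp add: is_norm_scaleR[OF N])
  then show ?thesis using pos by (simp add: field_simps)
qed

lemma dual_norm_least:
  assumes "\<And>x. N x \<le> 1 \<Longrightarrow> g \<bullet> x \<le> B"
  shows "dual_norm N g \<le> B"
  unfolding dual_norm_def
proof (rule cSup_least)
  have "g \<bullet> 0 \<in> {g \<bullet> x |x. N x \<le> 1}"
    using is_norm_zero[OF N] by (intro CollectI exI[of _ 0]) simp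
  then show "{g \<bullet> x |x. N x \<le> 1} \<noteq> {}" by blast
qed (use assms in blast)

end

section \<open>Distance to a subspace\<close>

lemma continuous_attains_inf_coercive:
  fixes \<phi> :: "'a::{heine_borel,real_normed_vector} \<Rightarrow> real"
  assumes "closed S" "a \<in> S" "continuous_on S \<phi>"
    and bounded_sublevel: "\<And>y. y \<in> S \<Longrightarrow> \<phi> y \<le> \<phi> a \<Longrightarrow> norm y \<le> R"
  shows "\<exists>z\<in>S. \<forall>y\<in>S. \<phi> z \<le> \<phi> y"
proof -
  have "a \<in> S \<inter> cball 0 R" using assms(2) bounded_sublevel[of a] by simp
  then obtain z where z: "z \<in> S \<inter> cball 0 R" "\<forall>y\<in>S \<inter> cball 0 R. \<phi> z \<le> \<phi> y"
    using continuous_attains_inf[of "S \<inter> cball 0 R" \<phi>] assms(1,3)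
    by (metis closed_Int_compact compact_cball continuous_on_subset empty_iff inf_le1)
  have "\<phi> z \<le> \<phi> y" if "y \<in> S" for y
  proof (cases "norm y \<le> R")
    case True
    then show ?thesis using that z(2) by simp
  next
    case False
    then have "\<phi> a < \<phi> y" using bounded_sublevel[OF that] by fastforce
    moreover have "\<phi> z \<le> \<phi> a" using z(2) \<open>a \<in> S \<inter> cball 0 R\<close> by blast
    ultimately show ?thesis by simp
  qed
  then show ?thesis using z(1) by blast
qed

context
  fixes N :: "'a::euclidean_space \<Rightarrow> real" and E :: "'a set"
  assumes N: "is_norm N" and E: "subspace E"
begin

lemma dist_to_le: "e \<in> E \<Longrightarrow> dist_to N E x \<le> N (x - e)"
  unfolding dist_to_def by (rule cInf_lower) (auto simp: bdd_below_def intro: is_norm_nonneg[OF N])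

lemma dist_to_attained: "\<exists>e\<in>E. dist_to N E x = N (x - e)"
proof -
  obtain c where c: "0 < c" "\<And>y. c * norm y \<le> N y"
    using is_norm_equivalent[OF N] by blast
  have "\<exists>e\<in>E. \<forall>e'\<in>E. N (x - e) \<le> N (x - e')"
  proof (rule continuous_attains_inf_coercive[where a = 0 and R = "2 * N x / c"])
    show "closed E" using E by (rule closed_subspace)
    show "0 \<in> E" using E by (rule subspace_0)
    show "continuous_on E (\<lambda>e. N (x - e))"
      by (intro continuous_on_compose2[OF continuous_on_is_norm[OF N]] continuous_intros) auto
  next
    fix e assume "N (x - e) \<le> N (x - 0)"
    then have "N e \<le> 2 * N x"
      using is_norm_triangle_diff[OF N, of e 0 x] is_norm_minus[OF N, of "e - x"] by simp
    then have "c * norm e \<le> 2 * N x" using c(2)[of e] by linarith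
    then show "norm e \<le> 2 * N x / c" using c(1) by (simp add: field_simps mult.commute)
  qed
  then obtain e where "e \<in> E" "\<forall>e'\<in>E. N (x - e) \<le> N (x - e')" by blast
  then show ?thesis unfolding dist_to_def by (intro bexI[of _ e] cInf_eq_minimum) auto
qed

lemma dist_to_nonneg: "0 \<le> dist_to N E x"
  using dist_to_attained is_norm_nonneg[OF N] by metis

lemma dist_to_add_subspace: "e \<in> E \<Longrightarrow> dist_to N E (x + e) = dist_to N E x"
proof -
  have le: "dist_to N E (x + e) \<le> dist_to N E x" if "e \<in> E" for x e
  proof -
    obtain e' where "e' \<in> E" "dist_to N E x = N (x - e')" using dist_to_attained by blast
    moreover have "e' + e \<in> E" using E \<open>e' \<in> E\<close> \<open>e \<in> E\<close> by (rule subspace_add)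
    ultimately show ?thesis using dist_to_le[of "e' + e" "x + e"] by simp
  qed
  assume "e \<in> E"
  then have "- e \<in> E" using E by (simp add: subspace_neg)
  then show ?thesis using le[OF \<open>e \<in> E\<close>, of x] le[of "- e" "x + e"] by simp
qed

lemma dist_to_triangle: "dist_to N E x \<le> dist_to N E y + N (x - y)"
proof -
  obtain e where "e \<in> E" "dist_to N E y = N (y - e)" using dist_to_attained by blast
  then show ?thesis using dist_to_le[of e x] is_norm_triangle_diff[OF N, of x e y] by simp
qed

lemma convex_on_dist_to: "convex_on UNIV (dist_to N E)"
proof (rule convex_onI)
  fix t :: real and x y :: 'a
  assume t: "0 < t" "t < 1"
  obtain ex where ex: "ex \<in> E" "dist_to N E x = N (x - ex)" using dist_to_attained by blast
  obtain ey where ey: "ey \<in> E" "dist_to N E y = N (y - ey)" using dist_to_attained by blast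
  have "(1 - t) *\<^sub>R ex + t *\<^sub>R ey \<in> E"
    using E ex ey by (simp add: subspace_add subspace_scale)
  then have "dist_to N E ((1 - t) *\<^sub>R x + t *\<^sub>R y)
      \<le> N ((1 - t) *\<^sub>R (x - ex) + t *\<^sub>R (y - ey))"
    by (rule dist_to_le[THEN order_trans]) (simp add: algebra_simps)
  also have "\<dots> \<le> (1 - t) * N (x - ex) + t * N (y - ey)"
    by (rule convex_onD[OF convex_on_is_norm[OF N]]) (use t in auto)
  finally show "dist_to N E ((1 - t) *\<^sub>R x + t *\<^sub>R y) \<le> (1 - t) * dist_to N E x + t * dist_to N E y"
    using ex ey by simp
qed simp

lemma continuous_on_dist_to: "continuous_on UNIV (dist_to N E)"
  by (intro convex_on_continuous convex_on_dist_to) simp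

end

section \<open>Smooth and convex functions\<close>

lemma convex_on_scaled_power2:
  fixes q :: "'a::real_vector \<Rightarrow> real"
  assumes q: "convex_on UNIV q" "\<And>x. 0 \<le> q x" and "0 \<le> c"
  shows "convex_on UNIV (\<lambda>x. c * (q x)\<^sup>2)"
proof -
  have "convex_on UNIV (\<lambda>x. (q x)\<^sup>2)"
  proof (rule convex_onI)
    fix t :: real and x y :: 'a
    assume t: "0 < t" "t < 1"
    have "(q ((1 - t) *\<^sub>R x + t *\<^sub>R y))\<^sup>2 \<le> ((1 - t) * q x + t * q y)\<^sup>2"
      using t q by (intro power_mono convex_onD[OF q(1)]) auto
    also have "\<dots> = (1 - t) * (q x)\<^sup>2 + t * (q y)\<^sup>2 - t * (1 - t) * (q x - q y)\<^sup>2"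
      by (simp add: power2_eq_square algebra_simps)
    also have "\<dots> \<le> (1 - t) * (q x)\<^sup>2 + t * (q y)\<^sup>2"
      using t by simp
    finally show "(q ((1 - t) *\<^sub>R x + t *\<^sub>R y))\<^sup>2 \<le> (1 - t) * (q x)\<^sup>2 + t * (q y)\<^sup>2" .
  qed simp
  then show ?thesis by (rule convex_on_cmul[OF \<open>0 \<le> c\<close>])
qed

lemma has_real_derivative_along_line:
  assumes "\<And>x. (\<phi> has_derivative (\<lambda>h. G x \<bullet> h)) (at x)"
  shows "((\<lambda>t. \<phi> (a + t *\<^sub>R d)) has_real_derivative G (a + t *\<^sub>R d) \<bullet> d) (at t)"
proof -
  have "((\<lambda>t. \<phi> (a + t *\<^sub>R d)) has_derivative (\<lambda>s. G (a + t *\<^sub>R d) \<bullet> (s *\<^sub>R d))) (at t)"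
    by (rule has_derivative_compose[OF _ assms]) (auto intro!: derivative_eq_intros)
  then show ?thesis by (rule has_derivative_imp_has_field_derivative) simp
qed

lemma lipschitz_gradient_quadratic_upper_bound:
  fixes \<phi> :: "'a::euclidean_space \<Rightarrow> real"
  assumes N: "is_norm N" and grad: "\<And>x. (\<phi> has_derivative (\<lambda>h. G x \<bullet> h)) (at x)"
    and lip: "\<And>x y. dual_norm N (G x - G y) \<le> L * N (x - y)"
  shows "\<phi> b \<le> \<phi> a + G a \<bullet> (b - a) + L / 2 * (N (b - a))\<^sup>2"
proof -
  define d where "d = b - a"
  define \<psi> where "\<psi> t = \<phi> (a + t *\<^sub>R d) - t * (G a \<bullet> d) - L / 2 * t\<^sup>2 * (N d)\<^sup>2" for t
  have "(\<psi> has_real_derivative (G (a + t *\<^sub>R d) - G a) \<bullet> d - L * t * (N d)\<^sup>2) (at t)" for t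
    unfolding \<psi>_def inner_diff_left
    by (auto intro!: derivative_eq_intros has_real_derivative_along_line[OF grad])
  moreover have "(G (a + t *\<^sub>R d) - G a) \<bullet> d \<le> L * t * (N d)\<^sup>2" if "0 \<le> t" for t
  proof -
    have "(G (a + t *\<^sub>R d) - G a) \<bullet> d \<le> dual_norm N (G (a + t *\<^sub>R d) - G a) * N d"
      by (rule inner_le_dual_norm[OF N])
    also have "\<dots> \<le> L * N (t *\<^sub>R d) * N d"
      using lip[of "a + t *\<^sub>R d" a] is_norm_nonneg[OF N, of d] by (simp add: mult_right_mono)
    finally show ?thesis using that by (simp add: is_norm_scaleR[OF N] power2_eq_square mult.assoc)
  qed
  ultimately have "\<psi> 1 \<le> \<psi> 0"
    by (intro DERIV_nonpos_imp_nonincreasing[of 0 1]) (auto intro!: exI)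
  then show ?thesis by (simp add: \<psi>_def d_def)
qed

lemma convex_on_gradient_inequality:
  fixes \<phi> :: "'a::real_inner \<Rightarrow> real"
  assumes convex: "convex_on UNIV \<phi>" and deriv: "(\<phi> has_derivative (\<lambda>h. v \<bullet> h)) (at a)"
  shows "\<phi> a + v \<bullet> (b - a) \<le> \<phi> b"
proof -
  define \<psi> where "\<psi> t = \<phi> (a + t *\<^sub>R (b - a))" for t
  have "convex_on UNIV \<psi>"
  proof (rule convex_onI)
    fix t s1 s2 :: real assume "0 < t" "t < 1"
    moreover have "a + ((1 - t) * s1 + t * s2) *\<^sub>R (b - a)
        = (1 - t) *\<^sub>R (a + s1 *\<^sub>R (b - a)) + t *\<^sub>R (a + s2 *\<^sub>R (b - a))"
      by (simp add: algebra_simps)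
    ultimately show "\<psi> ((1 - t) *\<^sub>R s1 + t *\<^sub>R s2) \<le> (1 - t) * \<psi> s1 + t * \<psi> s2"
      unfolding \<psi>_def by (simp add: convex_onD[OF convex])
  qed simp
  moreover have "(\<psi> has_real_derivative v \<bullet> (b - a)) (at 0)"
  proof -
    have "(\<psi> has_derivative (\<lambda>s. v \<bullet> (s *\<^sub>R (b - a)))) (at 0)"
      unfolding \<psi>_def by (rule has_derivative_compose[of _ _ 0 _ \<phi>]) (auto intro!: derivative_eq_intros deriv)
    then show ?thesis by (rule has_derivative_imp_has_field_derivative) simp
  qed
  ultimately have "\<psi> 1 - \<psi> 0 \<ge> v \<bullet> (b - a) * (1 - 0)"
    by (intro convex_on_imp_above_tangent[where A = UNIV]) auto
  then show ?thesis by (simp add: \<psi>_def)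
qed

lemma convex_on_increment_ge_if_quadratic_minorant:
  fixes \<phi> :: "'a::real_vector \<Rightarrow> real"
  assumes convex: "convex_on UNIV \<phi>"
    and minorant: "\<And>t. 0 < t \<Longrightarrow> t < 1 \<Longrightarrow> t * c - t\<^sup>2 * C \<le> \<phi> (a + t *\<^sub>R d) - \<phi> a"
  shows "c \<le> \<phi> (a + d) - \<phi> a"
proof (rule tendsto_upperbound)
  show "((\<lambda>t. c - t * C) \<longlongrightarrow> c) (at_right 0)"
    by (auto intro!: tendsto_eq_intros)
  have "eventually (\<lambda>t. t \<in> {0<..<1}) (at_right (0::real))"
    by (rule eventually_at_right_real) simp
  then show "eventually (\<lambda>t. c - t * C \<le> \<phi> (a + d) - \<phi> a) (at_right 0)"
  proof eventually_elim
    fix t :: real assume t: "t \<in> {0<..<1}"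
    have "\<phi> ((1 - t) *\<^sub>R a + t *\<^sub>R (a + d)) \<le> (1 - t) * \<phi> a + t * \<phi> (a + d)"
      using t by (intro convex_onD[OF convex]) auto
    moreover have "(1 - t) *\<^sub>R a + t *\<^sub>R (a + d) = a + t *\<^sub>R d" by (simp add: algebra_simps)
    ultimately have "t * (c - t * C) \<le> t * (\<phi> (a + d) - \<phi> a)"
      using minorant[of t] t by (simp add: power2_eq_square algebra_simps)
    then show "c - t * C \<le> \<phi> (a + d) - \<phi> a" using t by simp
  qed
qed simp

lemma convex_on_if_subgradients:
  fixes \<phi> :: "'a::real_inner \<Rightarrow> real"
  assumes subgradient: "\<And>x y. \<phi> x + G x \<bullet> (y - x) \<le> \<phi> y"
  shows "convex_on UNIV \<phi>"
proof (rule convex_onI)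
  fix t :: real and x y :: 'a
  assume t: "0 < t" "t < 1"
  define z where "z = (1 - t) *\<^sub>R x + t *\<^sub>R y"
  have "(1 - t) * (\<phi> z + G z \<bullet> (x - z)) + t * (\<phi> z + G z \<bullet> (y - z)) \<le> (1 - t) * \<phi> x + t * \<phi> y"
    using t by (intro add_mono mult_left_mono subgradient) auto
  moreover have "(1 - t) * (G z \<bullet> (x - z)) + t * (G z \<bullet> (y - z)) = 0"
    unfolding z_def by (simp add: algebra_simps inner_diff_right inner_add_right)
  ultimately show "\<phi> ((1 - t) *\<^sub>R x + t *\<^sub>R y) \<le> (1 - t) * \<phi> x + t * \<phi> y"
    unfolding z_def[symmetric] by (simp add: algebra_simps)
qed simp

lemma has_derivative_if_quadratic_sandwich:
  fixes \<phi> :: "'a::real_inner \<Rightarrow> real"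
  assumes lower: "\<And>y. \<phi> x + v \<bullet> (y - x) \<le> \<phi> y"
    and upper: "\<And>y. \<phi> y \<le> \<phi> x + v \<bullet> (y - x) + B * (norm (y - x))\<^sup>2"
  shows "(\<phi> has_derivative (\<lambda>h. v \<bullet> h)) (at x)"
proof -
  define r where "r y = norm (\<phi> y - \<phi> x - v \<bullet> (y - x)) / norm (y - x)" for y
  have r_le: "r y \<le> B * norm (y - x)" for y
  proof (cases "y = x")
    case False
    then have "0 < norm (y - x)" by simp
    moreover have "norm (\<phi> y - \<phi> x - v \<bullet> (y - x)) \<le> B * norm (y - x) * norm (y - x)"
      using lower[of y] upper[of y] by (simp add: power2_eq_square mult.assoc)
    ultimately show ?thesis unfolding r_def by (simp only: pos_divide_le_eq)
  qed (simp add: r_def)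
  have lim: "((\<lambda>y. B * norm (y - x)) \<longlongrightarrow> 0) (at x)"
    by (intro tendsto_mult_right_zero tendsto_norm_zero LIM_zero tendsto_ident_at)
  have "(r \<longlongrightarrow> 0) (at x)"
    by (rule tendsto_sandwich[OF _ _ tendsto_const lim]) (simp add: r_def, simp add: r_le)
  then show ?thesis
    unfolding has_derivative_iff_norm r_def by (simp add: bounded_linear_inner_right)
qed

lemma le_mult_if_quadratic_bound:
  fixes D P K :: real
  assumes "0 \<le> D" "0 \<le> P" "0 \<le> K"
    and bound: "\<And>s. 0 < s \<Longrightarrow> 2 * s * D \<le> D * P + K * s\<^sup>2"
  shows "D \<le> K * P"
proof (cases "D = 0")
  case True
  then show ?thesis using assms by simp
next
  case False
  then have "0 < D" using assms by simp
  show ?thesis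
  proof (cases "K = 0")
    case True
    then have "D * P + 2 * D \<le> 0"
      using bound[of "P + 1"] \<open>0 \<le> P\<close> by (simp add: algebra_simps)
    moreover have "0 < D * P + 2 * D" using \<open>0 < D\<close> \<open>0 \<le> P\<close> by (simp add: add_nonneg_pos)
    ultimately show ?thesis by simp
  next
    case False
    then have "0 < K" using assms by simp
    then have "2 * D\<^sup>2 / K \<le> D * P + D\<^sup>2 / K"
      using bound[of "D / K"] \<open>0 < D\<close> by (simp add: power2_eq_square)
    then have "D * D \<le> D * (K * P)"
      using \<open>0 < K\<close> by (simp add: power2_eq_square field_simps)
    then show ?thesis using \<open>0 < D\<close> by simp
  qed
qed

section \<open>The Moreau envelope\<close>

locale moreau_envelope_setting =
  fixes E :: "'a::euclidean_space set" and Nc Ns :: "'a \<Rightarrow> real" and L \<theta> :: real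
    and Gs :: "'a \<Rightarrow> 'a"
  assumes subspace_E: "subspace E" and Nc: "is_norm Nc" and Ns: "is_norm Ns"
    and has_derivative_Gs: "\<And>x. ((\<lambda>x. (1/2) * (Ns x)\<^sup>2) has_derivative (\<lambda>v. Gs x \<bullet> v)) (at x)"
    and lipschitz_Gs: "\<And>x y. dual_norm Ns (Gs x - Gs y) \<le> L * Ns (x - y)"
    and theta_pos: "0 < \<theta>"
begin

definition half_sq_dist :: "'a \<Rightarrow> real" where
  "half_sq_dist y = (1/2) * (dist_to Nc E y)\<^sup>2"

definition penalty :: "'a \<Rightarrow> real" where
  "penalty w = (1 / (2 * \<theta>)) * (Ns w)\<^sup>2"

definition objective :: "'a \<Rightarrow> 'a \<Rightarrow> real" where
  "objective x y = half_sq_dist y + penalty (x - y)"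

abbreviation M :: "'a \<Rightarrow> real" where
  "M \<equiv> moreau_env Nc Ns E \<theta>"

lemma M_eq_Inf: "M x = Inf (range (objective x))"
  unfolding moreau_env_def objective_def half_sq_dist_def penalty_def ..

lemma L_nonneg: "0 \<le> L"
proof -
  obtain b :: 'a where "b \<in> Basis" using nonempty_Basis by blast
  then have "0 < Ns b"
    using is_norm_eq_0_iff[OF Ns, of b] is_norm_nonneg[OF Ns, of b] by fastforce
  moreover have "0 \<le> L * Ns b"
    using dual_norm_nonneg[OF Ns, of "Gs b - Gs 0"] lipschitz_Gs[of b 0] by simp
  ultimately show ?thesis by (simp add: zero_le_mult_iff)
qed

lemma half_sq_dist_nonneg: "0 \<le> half_sq_dist y"
  by (simp add: half_sq_dist_def)

lemma penalty_nonneg: "0 \<le> penalty w"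
  using theta_pos by (simp add: penalty_def)

lemma convex_on_half_sq_dist: "convex_on UNIV half_sq_dist"
  unfolding half_sq_dist_def[abs_def]
  by (intro convex_on_scaled_power2 convex_on_dist_to[OF Nc subspace_E]
      dist_to_nonneg[OF Nc subspace_E]) simp

lemma convex_on_penalty: "convex_on UNIV penalty"
  unfolding penalty_def[abs_def] using theta_pos
  by (intro convex_on_scaled_power2 convex_on_is_norm[OF Ns] is_norm_nonneg[OF Ns]) simp

lemma half_sq_dist_add_subspace: "e \<in> E \<Longrightarrow> half_sq_dist (y + e) = half_sq_dist y"
  by (simp add: half_sq_dist_def dist_to_add_subspace[OF Nc subspace_E])

lemma penalty_has_derivative:
  "(penalty has_derivative (\<lambda>v. ((1/\<theta>) *\<^sub>R Gs w) \<bullet> v)) (at w)"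
proof -
  have "((\<lambda>w. (1/\<theta>) * ((1/2) * (Ns w)\<^sup>2)) has_derivative (\<lambda>v. (1/\<theta>) * (Gs w \<bullet> v))) (at w)"
    by (rule has_derivative_mult_right[OF has_derivative_Gs])
  moreover have "penalty = (\<lambda>w. (1/\<theta>) * ((1/2) * (Ns w)\<^sup>2))"
    by (simp add: fun_eq_iff penalty_def)
  ultimately show ?thesis by simp
qed

lemma penalty_upper_bound:
  "penalty b \<le> penalty a + ((1/\<theta>) *\<^sub>R Gs a) \<bullet> (b - a) + L / (2 * \<theta>) * (Ns (b - a))\<^sup>2"
proof -
  have "(1/2) * (Ns b)\<^sup>2 \<le> (1/2) * (Ns a)\<^sup>2 + Gs a \<bullet> (b - a) + L / 2 * (Ns (b - a))\<^sup>2"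
    by (rule lipschitz_gradient_quadratic_upper_bound[OF Ns has_derivative_Gs lipschitz_Gs])
  then have "(1/\<theta>) * ((1/2) * (Ns b)\<^sup>2)
      \<le> (1/\<theta>) * ((1/2) * (Ns a)\<^sup>2 + Gs a \<bullet> (b - a) + L / 2 * (Ns (b - a))\<^sup>2)"
    using theta_pos by (intro mult_left_mono) auto
  then show ?thesis by (simp add: penalty_def algebra_simps)
qed

lemma penalty_gradient_inequality: "penalty a + ((1/\<theta>) *\<^sub>R Gs a) \<bullet> (b - a) \<le> penalty b"
  by (rule convex_on_gradient_inequality[OF convex_on_penalty penalty_has_derivative])

lemma M_le_objective: "M x \<le> objective x y"
  unfolding M_eq_Inf
  by (rule cInf_lower) (auto simp: bdd_below_def objective_def intro: add_nonneg_nonneg half_sq_dist_nonneg penalty_nonneg)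

lemma continuous_on_objective: "continuous_on UNIV (objective x)"
proof -
  have "continuous_on UNIV (\<lambda>y. Ns (x - y))"
    by (intro continuous_on_compose2[OF continuous_on_is_norm[OF Ns]] continuous_intros) auto
  then show ?thesis
    unfolding objective_def[abs_def] half_sq_dist_def penalty_def
    by (intro continuous_intros continuous_on_dist_to[OF Nc subspace_E])
qed

lemma objective_has_minimizer: "\<exists>z. \<forall>y. objective x z \<le> objective x y"
proof -
  obtain c where c: "0 < c" "\<And>y. c * norm y \<le> Ns y"
    using is_norm_equivalent[OF Ns] by blast
  define r where "r = sqrt (2 * \<theta> * objective x x)"
  have "\<exists>z\<in>UNIV. \<forall>y\<in>UNIV. objective x z \<le> objective x y"
  proof (rule continuous_attains_inf_coercive[where a = x and R = "norm x + r / c"])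
    fix y assume "objective x y \<le> objective x x"
    then have "penalty (x - y) \<le> objective x x"
      using half_sq_dist_nonneg[of y] by (simp add: objective_def)
    then have "(Ns (x - y))\<^sup>2 \<le> 2 * \<theta> * objective x x"
      using theta_pos by (simp add: penalty_def field_simps)
    then have "c * norm (x - y) \<le> r"
      unfolding r_def using c(2)[of "x - y"] by (meson order_trans real_le_rsqrt)
    then have "norm (x - y) \<le> r / c" using c(1) by (simp add: field_simps mult.commute)
    then show "norm y \<le> norm x + r / c" using norm_triangle_sub[of y x] by (simp add: norm_minus_commute)
  qed (auto intro: continuous_on_objective)
  then show ?thesis by blast
qed

definition prox :: "'a \<Rightarrow> 'a" where
  "prox x = (SOME z. \<forall>y. objective x z \<le> objective x y)"

lemma objective_prox_le: "objective x (prox x) \<le> objective x y"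
  using someI_ex[OF objective_has_minimizer[of x]] unfolding prox_def by blast

lemma M_eq_objective_prox: "M x = objective x (prox x)"
  unfolding M_eq_Inf by (rule cInf_eq_minimum) (auto intro: objective_prox_le)

definition grad :: "'a \<Rightarrow> 'a" where
  "grad x = (1/\<theta>) *\<^sub>R Gs (x - prox x)"

lemma half_sq_dist_subgradient: "half_sq_dist (prox x) + grad x \<bullet> d \<le> half_sq_dist (prox x + d)"
proof -
  let ?z = "prox x"
  have "grad x \<bullet> d \<le> half_sq_dist (?z + d) - half_sq_dist ?z"
  proof (rule convex_on_increment_ge_if_quadratic_minorant[OF convex_on_half_sq_dist,
        where C = "L / (2 * \<theta>) * (Ns d)\<^sup>2"])
    fix t :: real assume t: "0 < t" "t < 1"
    have "penalty (x - (?z + t *\<^sub>R d))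
        \<le> penalty (x - ?z) + grad x \<bullet> (- (t *\<^sub>R d)) + L / (2 * \<theta>) * (Ns (- (t *\<^sub>R d)))\<^sup>2"
      using penalty_upper_bound[of "x - (?z + t *\<^sub>R d)" "x - ?z"] by (simp add: grad_def)
    also have "\<dots> = penalty (x - ?z) - t * (grad x \<bullet> d) + t\<^sup>2 * (L / (2 * \<theta>) * (Ns d)\<^sup>2)"
      using t by (simp add: is_norm_minus[OF Ns] is_norm_scaleR[OF Ns] power_mult_distrib)
    finally show "t * (grad x \<bullet> d) - t\<^sup>2 * (L / (2 * \<theta>) * (Ns d)\<^sup>2)
        \<le> half_sq_dist (?z + t *\<^sub>R d) - half_sq_dist ?z"
      using objective_prox_le[of x "?z + t *\<^sub>R d"] by (simp add: objective_def)
  qed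
  then show ?thesis by simp
qed

lemma M_subgradient: "M x + grad x \<bullet> (y - x) \<le> M y"
proof -
  have "half_sq_dist (prox x) + grad x \<bullet> (prox y - prox x) \<le> half_sq_dist (prox y)"
    using half_sq_dist_subgradient[of x "prox y - prox x"] by simp
  moreover have "penalty (x - prox x) + grad x \<bullet> ((y - prox y) - (x - prox x)) \<le> penalty (y - prox y)"
    using penalty_gradient_inequality by (simp add: grad_def)
  moreover have "grad x \<bullet> (prox y - prox x) + grad x \<bullet> ((y - prox y) - (x - prox x)) = grad x \<bullet> (y - x)"
    by (simp add: inner_diff_right)
  ultimately show ?thesis by (simp add: M_eq_objective_prox objective_def)
qed

lemma M_upper_bound: "M y \<le> M x + grad x \<bullet> (y - x) + L / (2 * \<theta>) * (Ns (y - x))\<^sup>2"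
proof -
  have "M y \<le> half_sq_dist (prox x) + penalty (y - prox x)"
    using M_le_objective by (simp add: objective_def)
  also have "penalty (y - prox x)
      \<le> penalty (x - prox x) + grad x \<bullet> (y - x) + L / (2 * \<theta>) * (Ns (y - x))\<^sup>2"
    using penalty_upper_bound[of "y - prox x" "x - prox x"] by (simp add: grad_def)
  finally show ?thesis by (simp add: M_eq_objective_prox objective_def)
qed

lemma M_add_subspace: "e \<in> E \<Longrightarrow> M (x + e) = M x"
proof -
  have le: "M x \<le> M (x + e)" if "e \<in> E" for x e
  proof -
    have "- e \<in> E" using subspace_E that by (simp add: subspace_neg)
    then have "objective x (prox (x + e) - e) = objective (x + e) (prox (x + e))"
      using half_sq_dist_add_subspace[of "- e" "prox (x + e)"] by (simp add: objective_def algebra_simps)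
    then show ?thesis using M_le_objective[of x] M_eq_objective_prox[of "x + e"] by metis
  qed
  assume "e \<in> E"
  then have "- e \<in> E" using subspace_E by (simp add: subspace_neg)
  then show ?thesis using le[OF \<open>e \<in> E\<close>, of x] le[of "- e" "x + e"] by simp
qed

lemma grad_orthogonal: "e \<in> E \<Longrightarrow> grad x \<bullet> e = 0"
proof -
  assume "e \<in> E"
  then have "- e \<in> E" using subspace_E by (simp add: subspace_neg)
  have "grad x \<bullet> e \<le> 0"
    using M_subgradient[of x "x + e"] M_add_subspace[OF \<open>e \<in> E\<close>] by simp
  moreover have "- (grad x \<bullet> e) \<le> 0"
    using M_subgradient[of x "x + - e"] M_add_subspace[OF \<open>- e \<in> E\<close>] by simp
  ultimately show ?thesis by simp
qed

lemma M_upper_bound_dist_to: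
  "M y \<le> M x + grad x \<bullet> (y - x) + L / (2 * \<theta>) * (dist_to Ns E (y - x))\<^sup>2"
proof -
  obtain e where e: "e \<in> E" "dist_to Ns E (y - x) = Ns (y - x - e)"
    using dist_to_attained[OF Ns subspace_E] by blast
  then have "- e \<in> E" using subspace_E by (simp add: subspace_neg)
  then have "M y = M (y - e)" using M_add_subspace[of "- e" y] by simp
  also have "\<dots> \<le> M x + grad x \<bullet> (y - e - x) + L / (2 * \<theta>) * (Ns (y - e - x))\<^sup>2"
    by (rule M_upper_bound)
  also have "grad x \<bullet> (y - e - x) = grad x \<bullet> (y - x)"
    using grad_orthogonal[OF e(1), of x] by (simp add: inner_diff_right)
  finally show ?thesis using e(2) by (simp add: algebra_simps)
qed

lemma M_has_derivative: "(M has_derivative (\<lambda>h. grad x \<bullet> h)) (at x)"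
proof -
  obtain C where C: "\<And>z. Ns z \<le> C * norm z"
    using is_norm_equivalent[OF Ns] by blast
  have "M y \<le> M x + grad x \<bullet> (y - x) + L / (2 * \<theta>) * C\<^sup>2 * (norm (y - x))\<^sup>2" for y
  proof -
    have "(Ns (y - x))\<^sup>2 \<le> (C * norm (y - x))\<^sup>2"
      using C is_norm_nonneg[OF Ns, of "y - x"] by (intro power_mono) auto
    moreover have "0 \<le> L / (2 * \<theta>)" using L_nonneg theta_pos by simp
    ultimately have "L / (2 * \<theta>) * (Ns (y - x))\<^sup>2 \<le> L / (2 * \<theta>) * (C * norm (y - x))\<^sup>2"
      by (rule mult_left_mono)
    then show ?thesis using M_upper_bound[of y x] by (simp add: power_mult_distrib mult.assoc)
  qed
  then show ?thesis by (intro has_derivative_if_quadratic_sandwich M_subgradient)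
qed

lemma convex_on_M: "convex_on UNIV M"
  by (rule convex_on_if_subgradients) (rule M_subgradient)

lemma grad_diff_inner_le:
  assumes "Ns w \<le> 1" "0 < s"
  shows "2 * s * ((grad x - grad y) \<bullet> w) \<le> (grad x - grad y) \<bullet> (x - y) + L / \<theta> * s\<^sup>2"
proof -
  define v where "v = s *\<^sub>R w"
  have "L / (2 * \<theta>) * (Ns v)\<^sup>2 \<le> L / (2 * \<theta>) * s\<^sup>2"
  proof -
    have "Ns v \<le> s" using assms by (simp add: v_def is_norm_scaleR[OF Ns] mult_left_le)
    then have "(Ns v)\<^sup>2 \<le> s\<^sup>2" using is_norm_nonneg[OF Ns, of v] by (intro power_mono)
    then show ?thesis using L_nonneg theta_pos by (intro mult_left_mono) auto
  qed
  moreover have "M x + grad x \<bullet> (y + v - x) \<le> M (y + v)"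
    and "M (y + v) \<le> M y + grad y \<bullet> v + L / (2 * \<theta>) * (Ns v)\<^sup>2"
    and "M y + grad y \<bullet> (x - v - y) \<le> M (x - v)"
    and "M (x - v) \<le> M x - grad x \<bullet> v + L / (2 * \<theta>) * (Ns v)\<^sup>2"
    using M_subgradient M_upper_bound[of "y + v" y] M_upper_bound[of "x - v" x]
    by (simp_all add: is_norm_minus[OF Ns] inner_minus_right)
  ultimately have "2 * ((grad x - grad y) \<bullet> v) \<le> (grad x - grad y) \<bullet> (x - y) + L / \<theta> * s\<^sup>2"
    by (simp add: inner_diff_right inner_add_right inner_diff_left field_simps)
  then show ?thesis by (simp add: v_def)
qed

lemma grad_lipschitz: "dual_norm Ns (grad x - grad y) \<le> L / \<theta> * dist_to Ns E (x - y)"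
proof -
  define \<Delta> where "\<Delta> = grad x - grad y"
  define P where "P = dist_to Ns E (x - y)"
  obtain e where e: "e \<in> E" "P = Ns (x - y - e)"
    using dist_to_attained[OF Ns subspace_E] unfolding P_def by blast
  have "\<Delta> \<bullet> (x - y) = \<Delta> \<bullet> (x - y - e)"
    using grad_orthogonal[OF e(1), of x] grad_orthogonal[OF e(1), of y]
    by (simp add: \<Delta>_def inner_diff_left inner_diff_right)
  also have "\<dots> \<le> dual_norm Ns \<Delta> * P"
    using e(2) inner_le_dual_norm[OF Ns] by simp
  finally have inner_le: "\<Delta> \<bullet> (x - y) \<le> dual_norm Ns \<Delta> * P" .
  have "2 * s * dual_norm Ns \<Delta> \<le> dual_norm Ns \<Delta> * P + L / \<theta> * s\<^sup>2" if "0 < s" for s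
  proof -
    have "dual_norm Ns \<Delta> \<le> (dual_norm Ns \<Delta> * P + L / \<theta> * s\<^sup>2) / (2 * s)"
    proof (rule dual_norm_least[OF Ns])
      fix w assume "Ns w \<le> 1"
      then have "2 * s * (\<Delta> \<bullet> w) \<le> dual_norm Ns \<Delta> * P + L / \<theta> * s\<^sup>2"
        using grad_diff_inner_le[OF _ that, of w x y] inner_le by (simp add: \<Delta>_def)
      then show "\<Delta> \<bullet> w \<le> (dual_norm Ns \<Delta> * P + L / \<theta> * s\<^sup>2) / (2 * s)"
        using that by (simp add: field_simps)
    qed
    then show ?thesis using that by (simp add: field_simps)
  qed
  moreover have "0 \<le> P" unfolding P_def by (rule dist_to_nonneg[OF Ns subspace_E])
  ultimately have "dual_norm Ns \<Delta> \<le> L / \<theta> * P"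
    using dual_norm_nonneg[OF Ns] L_nonneg theta_pos by (intro le_mult_if_quadratic_bound) auto
  then show ?thesis by (simp add: \<Delta>_def P_def)
qed

lemma M_le_half_sq_dist:
  assumes l: "0 < l" "\<And>x. l * Ns x \<le> Nc x"
  shows "(1 + \<theta> * l\<^sup>2) * M x \<le> half_sq_dist x"
proof -
  define c where "c = \<theta> * l\<^sup>2"
  have c: "0 < c" using theta_pos l(1) by (simp add: c_def)
  obtain e where e: "e \<in> E" "dist_to Nc E x = Nc (x - e)"
    using dist_to_attained[OF Nc subspace_E] by blast
  define n where "n = Nc (x - e)"
  define m where "m = Ns (x - e)"
  \<comment> \<open>This point of the segment from \<open>e\<close> to \<open>x\<close> balances the two terms of the objective.\<close>
  define y where "y = e + (1 / (1 + c)) *\<^sub>R (x - e)"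
  have "dist_to Nc E y \<le> Nc (y - e)" by (rule dist_to_le[OF Nc subspace_E e(1)])
  also have "\<dots> = n / (1 + c)" using c by (simp add: y_def n_def is_norm_scaleR[OF Nc])
  finally have "(dist_to Nc E y)\<^sup>2 \<le> (n / (1 + c))\<^sup>2"
    using dist_to_nonneg[OF Nc subspace_E, of y] by (intro power_mono)
  then have half_sq_dist_y: "half_sq_dist y \<le> n\<^sup>2 / (2 * (1 + c)\<^sup>2)"
    by (simp add: half_sq_dist_def power_divide)
  have "(l * m)\<^sup>2 \<le> n\<^sup>2"
    using l is_norm_nonneg[OF Ns, of "x - e"] by (intro power_mono) (auto simp: m_def n_def)
  then have m_le: "c * m\<^sup>2 \<le> \<theta> * n\<^sup>2" using theta_pos by (simp add: c_def power_mult_distrib)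
  have "x - y = (1 - 1 / (1 + c)) *\<^sub>R (x - e)" by (simp add: y_def algebra_simps)
  also have "1 - 1 / (1 + c) = c / (1 + c)" using c by (simp add: field_simps)
  finally have "penalty (x - y) = c * (c * m\<^sup>2) / (2 * \<theta> * (1 + c)\<^sup>2)"
    using c by (simp add: penalty_def m_def is_norm_scaleR[OF Ns] power_divide power2_eq_square)
  also have "\<dots> \<le> c * (\<theta> * n\<^sup>2) / (2 * \<theta> * (1 + c)\<^sup>2)"
    using m_le c theta_pos by (intro divide_right_mono mult_left_mono) auto
  also have "\<dots> = c * n\<^sup>2 / (2 * (1 + c)\<^sup>2)" using theta_pos by simp
  finally have penalty_le: "penalty (x - y) \<le> c * n\<^sup>2 / (2 * (1 + c)\<^sup>2)" .
  have "M x \<le> half_sq_dist y + penalty (x - y)"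
    using M_le_objective[of x y] by (simp add: objective_def)
  also have "\<dots> \<le> (1 + c) * n\<^sup>2 / (2 * (1 + c)\<^sup>2)"
    using add_mono[OF half_sq_dist_y penalty_le] by (simp add: add_divide_distrib distrib_right)
  also have "\<dots> = n\<^sup>2 / (2 * (1 + c))"
    using c by (simp add: power2_eq_square)
  finally show ?thesis
    using c e(2) by (simp add: c_def n_def half_sq_dist_def field_simps)
qed

lemma half_sq_dist_le_M:
  assumes u: "0 < u" "\<And>x. Nc x \<le> u * Ns x"
  shows "half_sq_dist x \<le> (1 + \<theta> * u\<^sup>2) * M x"
proof -
  define c where "c = \<theta> * u\<^sup>2"
  have c: "0 < c" using theta_pos u(1) by (simp add: c_def)
  define a where "a = dist_to Nc E (prox x)"
  define b where "b = u * Ns (x - prox x)"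
  have "dist_to Nc E x \<le> a + Nc (x - prox x)"
    unfolding a_def by (rule dist_to_triangle[OF Nc subspace_E])
  also have "\<dots> \<le> a + b" using u(2) by (simp add: b_def)
  finally have "(dist_to Nc E x)\<^sup>2 \<le> (a + b)\<^sup>2"
    using dist_to_nonneg[OF Nc subspace_E, of x] by (intro power_mono) auto
  also have "\<dots> \<le> (1 + c) * (a\<^sup>2 + b\<^sup>2 / c)"
  proof -
    have "(1 + c) * (a\<^sup>2 + b\<^sup>2 / c) - (a + b)\<^sup>2 = (c * a - b)\<^sup>2 / c"
      using c by (simp add: field_simps power2_eq_square)
    moreover have "0 \<le> (c * a - b)\<^sup>2 / c" using c by simp
    ultimately show ?thesis by linarith
  qed
  also have "a\<^sup>2 + b\<^sup>2 / c = 2 * M x"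
    using u theta_pos
    by (simp add: M_eq_objective_prox objective_def half_sq_dist_def penalty_def a_def b_def c_def
        power_mult_distrib field_simps)
  finally show ?thesis by (simp add: half_sq_dist_def c_def algebra_simps)
qed

end

theorem proposition2:
  fixes E :: "(real ^ 'd) set" and Nc Ns :: "real ^ 'd \<Rightarrow> real" and L \<theta> :: real
  assumes "subspace E"
    and "is_norm Nc" and "is_norm Ns"
    and "L_smooth Ns L (\<lambda>x. (1/2) * (Ns x)\<^sup>2)"
    and "\<theta> > 0"
  shows "convex_on UNIV (moreau_env Nc Ns E \<theta>)
    \<and> (\<exists>G. has_gradient_everywhere (moreau_env Nc Ns E \<theta>) G
         \<and> (\<forall>x y. moreau_env Nc Ns E \<theta> y
               \<le> moreau_env Nc Ns E \<theta> x + G x \<bullet> (y - x) + L / (2 * \<theta>) * (dist_to Ns E (y - x))\<^sup>2)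
         \<and> (\<forall>x y. dual_norm Ns (G x - G y) \<le> L / \<theta> * dist_to Ns E (x - y)))
    \<and> (\<forall>lcs ucs. lcs > 0 \<and> ucs > 0 \<and> (\<forall>x. lcs * Ns x \<le> Nc x \<and> Nc x \<le> ucs * Ns x) \<longrightarrow>
         (\<forall>x. (sqrt (1 + \<theta> * lcs\<^sup>2))\<^sup>2 * moreau_env Nc Ns E \<theta> x \<le> (1/2) * (dist_to Nc E x)\<^sup>2
            \<and> (1/2) * (dist_to Nc E x)\<^sup>2 \<le> (sqrt (1 + \<theta> * ucs\<^sup>2))\<^sup>2 * moreau_env Nc Ns E \<theta> x))"
proof -
  obtain Gs where "has_gradient_everywhere (\<lambda>x. (1/2) * (Ns x)\<^sup>2) Gs"
      "\<And>x y. dual_norm Ns (Gs x - Gs y) \<le> L * Ns (x - y)"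
    using assms(4) unfolding L_smooth_def by blast
  then interpret moreau_envelope_setting E Nc Ns L \<theta> Gs
    using assms by unfold_locales (auto simp: has_gradient_everywhere_def)
  have sqrt_sq: "(sqrt (1 + \<theta> * r\<^sup>2))\<^sup>2 = 1 + \<theta> * r\<^sup>2" for r
    using assms(5) by simp
  show ?thesis
  proof (intro conjI exI[of _ grad] allI impI)
    show "has_gradient_everywhere M grad"
      unfolding has_gradient_everywhere_def using M_has_derivative by blast
  next
    fix lcs ucs x
    assume "0 < lcs \<and> 0 < ucs \<and> (\<forall>x. lcs * Ns x \<le> Nc x \<and> Nc x \<le> ucs * Ns x)"
    then show "(sqrt (1 + \<theta> * lcs\<^sup>2))\<^sup>2 * M x \<le> (1/2) * (dist_to Nc E x)\<^sup>2"
      and "(1/2) * (dist_to Nc E x)\<^sup>2 \<le> (sqrt (1 + \<theta> * ucs\<^sup>2))\<^sup>2 * M x"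
      unfolding sqrt_sq half_sq_dist_def[symmetric]
      by (auto intro: M_le_half_sq_dist half_sq_dist_le_M)
  qed (use convex_on_M M_upper_bound_dist_to grad_lipschitz in auto)
qed

end
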